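(* Let $k$ be a positive integer, $q=2^k$, $F(X)=X^{q^2-q+1}$, $T_k(Y)=\sum_{i=0}^{k-1}Y^{2^i}$ and $f_{k,q+1}(Y)=\dfrac{T_k(Y)^{q+1}}{Y^{q}}$ (a polynomial in $\mathbb{F}_2[Y]$). Then, in $\mathbb{F}_2[X]$, $$F(X)+F(X+1)+1=f_{k,q+1}(X+X^2).$$
   Context: $f_{k,2^k+1}$ is the Müller–Cohen–Matthews polynomial; it is a polynomial because $Y$ divides $T_k(Y)$. *)

theory Defs
  imports "HOL-Library.Z2" "HOL-Computational_Algebra.Polynomial"
begin

text \<open>Polynomials over F_2 = the field type bit. X is the indeterminate [:0,1:].\<close>

definition T_poly :: "nat \<Rightarrow> bit poly" where
  "T_poly k = (\<Sum>i<k. monom 1 (2 ^ i))"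

text \<open>Mueller-Cohen-Matthews polynomial f_{k,q+1}(Y) = T_k(Y)^(q+1) / Y^q with q = 2^k;
  the division is exact (Y divides T_k).\<close>
definition f_MCM :: "nat \<Rightarrow> bit poly" where
  "f_MCM k = (T_poly k ^ (2 ^ k + 1)) div (monom 1 (2 ^ k))"

definition F_poly :: "nat \<Rightarrow> bit poly" where
  "F_poly k = monom 1 ((2 ^ k)\<^sup>2 - 2 ^ k + 1)"

end

theory Submission
  imports Defs "HOL-Computational_Algebra.Primes"
begin

text \<open>Substitute Y = X(1 + X) and clear the denominator Y^q, where q = 2^k. In characteristic 2
  we have (X + X^2)^(2^i) = X^(2^i) + X^(2^(i+1)), so T_k(Y) telescopes to X + X^q and the
  right-hand side times Y^q is (X + X^q)^(q+1). On the left, the exponent becomes q^2 + 1, and with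
  a = X^q, b = X^(q^2) the Frobenius map gives (1 + X)^q = 1 + a, (1 + X)^(q^2) = 1 + b and
  (X + a)^q = a + b; both sides then equal (a + b)(X + a) up to terms that cancel mod 2.\<close>

lemma CHAR_bit: "CHAR(bit) = 2"
  by (rule CHAR_eq_posI) (auto simp: less_2_cases_iff)

lemma add_self_CHAR_2:
  assumes "CHAR('a::ring_1) = 2"
  shows "(x::'a) + x = 0"
  using uminus_CHAR_2[OF assms, of x] by (metis add.right_inverse)

lemma power_two_power_add_CHAR_2:
  assumes "CHAR('a::comm_semiring_1) = 2"
  shows "((x::'a) + y) ^ (2 ^ n) = x ^ (2 ^ n) + y ^ (2 ^ n)"
  by (rule freshmans_dream') (simp_all add: assms)

lemma MCM_identity_CHAR_2:
  fixes x :: "'a::comm_ring_1"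
  assumes "CHAR('a) = 2" and "q = 2 ^ k"
  shows "(x ^ (q\<^sup>2 - q + 1) + (1 + x) ^ (q\<^sup>2 - q + 1) + 1) * (x * (1 + x)) ^ q
           = (x + x ^ q) ^ (q + 1)"
proof -
  define a where "a = x ^ q"
  define b where "b = x ^ q\<^sup>2"
  have q2: "q\<^sup>2 = 2 ^ (2 * k)"
    using assms(2) by (simp add: power_mult[symmetric] mult.commute)
  have frob_a: "(1 + x) ^ q = 1 + a"
    using power_two_power_add_CHAR_2[OF assms(1), of 1 x k] by (simp add: assms(2) a_def)
  have frob_b: "(1 + x) ^ q\<^sup>2 = 1 + b"
    using power_two_power_add_CHAR_2[OF assms(1), of 1 x "2 * k"] by (simp add: q2 b_def)
  have frob_ab: "(x + a) ^ q = a + b"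
    using power_two_power_add_CHAR_2[OF assms(1), of x a k]
    by (simp add: q2 assms(2) a_def b_def mult_2_right flip: power_mult power_add)
  have exponent: "q\<^sup>2 - q + 1 + q = q\<^sup>2 + 1"
    by (simp add: power2_eq_square)
  have "(x ^ (q\<^sup>2 - q + 1) + (1 + x) ^ (q\<^sup>2 - q + 1) + 1) * (x * (1 + x)) ^ q
      = x ^ (q\<^sup>2 - q + 1 + q) * (1 + x) ^ q + x ^ q * (1 + x) ^ (q\<^sup>2 - q + 1 + q)
        + x ^ q * (1 + x) ^ q"
    by (simp only: power_add power_mult_distrib) (simp add: algebra_simps)
  also have "\<dots> = b * x * (1 + a) + a * ((1 + b) * (1 + x)) + a * (1 + a)"
    by (simp only: exponent power_add power_one_right frob_a frob_b flip: a_def b_def)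
  also have "\<dots> = (a + b) * (x + a) + 2 * (a * b * x + a)"
    by (simp add: algebra_simps)
  also have "\<dots> = (x + a) ^ (q + 1)"
    using of_nat_CHAR[where 'a='a] by (simp add: assms(1) frob_ab mult.commute)
  finally show ?thesis
    by (simp add: a_def)
qed

lemma pcompose_power: "pcompose (p ^ n) r = pcompose p r ^ n"
  by (induction n) (simp_all add: pcompose_1 pcompose_mult)

lemma pcompose_T_poly: "pcompose (T_poly k) [:0, 1, 1:] = [:0, 1:] + [:0, 1:] ^ (2 ^ k)"
proof (induction k)
  case 0
  show ?case
    by (simp add: T_poly_def add_self_CHAR_2 CHAR_bit)
next
  case (Suc k)
  let ?X = "[:0, 1:] :: bit poly"
  have Y: "[:0, 1, 1:] = ?X + ?X ^ 2"
    by (simp add: power2_eq_square)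
  have "pcompose (T_poly (Suc k)) [:0, 1, 1:]
      = pcompose (T_poly k) [:0, 1, 1:] + [:0, 1, 1:] ^ (2 ^ k)"
    by (simp add: T_poly_def pcompose_add monom_altdef pcompose_power pcompose_pCons)
  also have "\<dots> = ?X + ?X ^ (2 ^ Suc k) + (?X ^ (2 ^ k) + ?X ^ (2 ^ k))"
    using Suc by (simp add: Y power_two_power_add_CHAR_2 CHAR_bit algebra_simps
        flip: power_mult)
  finally show ?case
    by (simp add: add_self_CHAR_2 CHAR_bit)
qed

lemma X_dvd_T_poly: "[:0, 1:] dvd T_poly k"
  unfolding T_poly_def monom_altdef by (intro dvd_sum) simp

lemma f_MCM_mult_monom: "f_MCM k * monom 1 (2 ^ k) = T_poly k ^ (2 ^ k + 1)"
proof -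
  have "monom 1 (2 ^ k) dvd T_poly k ^ (2 ^ k + 1)"
    using dvd_power_same[OF X_dvd_T_poly] by (simp add: monom_altdef)
  then show ?thesis
    unfolding f_MCM_def by (rule dvd_div_mult_self)
qed

lemma pcompose_f_MCM:
  "pcompose (f_MCM k) [:0, 1, 1:] * [:0, 1, 1:] ^ (2 ^ k)
     = ([:0, 1:] + [:0, 1:] ^ (2 ^ k)) ^ (2 ^ k + 1)"
proof -
  have "pcompose (f_MCM k * monom 1 (2 ^ k)) [:0, 1, 1:]
      = pcompose (T_poly k ^ (2 ^ k + 1)) [:0, 1, 1:]"
    by (simp only: f_MCM_mult_monom)
  then show ?thesis
    by (simp add: pcompose_mult pcompose_power pcompose_T_poly monom_altdef pcompose_pCons)
qed

theorem mainTheorem4: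
  fixes k :: nat
  assumes "k > 0"
  shows "F_poly k + pcompose (F_poly k) [:1, 1:] + 1
           = pcompose (f_MCM k) [:0, 1, 1:]"
proof -
  define X :: "bit poly" where "X = [:0, 1:]"
  define q :: nat where "q = 2 ^ k"
  define m where "m = q\<^sup>2 - q + 1"
  have X_plus_1: "[:1, 1:] = 1 + X"
    by (simp add: X_def one_pCons)
  have Y: "[:0, 1, 1:] = X * (1 + X)"
    by (simp add: X_def one_pCons)
  have "F_poly k + pcompose (F_poly k) [:1, 1:] + 1 = X ^ m + (1 + X) ^ m + 1"
    by (simp add: F_poly_def monom_altdef pcompose_power pcompose_pCons X_plus_1 X_def m_def q_def)
  moreover have "(X ^ m + (1 + X) ^ m + 1) * [:0, 1, 1:] ^ q
      = pcompose (f_MCM k) [:0, 1, 1:] * [:0, 1, 1:] ^ q"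
    using MCM_identity_CHAR_2[of q k X] pcompose_f_MCM[of k]
    by (simp add: CHAR_bit Y m_def q_def X_def)
  moreover have "[:0, 1, 1:] ^ q \<noteq> (0 :: bit poly)"
    by simp
  ultimately show ?thesis
    by simp
qed

end
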